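(* Let $\mathcal{V}$ be a variety of $\Omega$-algebras with equational base $\Sigma$, and let $\mathcal{W}$ be the variety defined by $\Sigma^p$. Then for any set $X$, the free $\mathcal{W}$-algebra $A=X\mathcal{W}$ is a semilattice sum of $\mathcal{V}$-algebras: $A=\bigsqcup_{s\in S}A_s$, where $S=A/\varrho\cong X\mathcal{S}$ is the free semilattice over $X$ ($\varrho$ the semilattice replica congruence of $A$) and every $\varrho$-class $A_s$ belongs to $\mathcal{V}$. In particular (taking $\Sigma=\mathrm{Id}(\mathcal{V})$), $X\mathcal{V}^p\in\mathcal{V}\circ\mathcal{S}$.
   Context: Standing conventions: $\Omega$-algebras are of a plural similarity type (no nullary operation symbols, at least one operation symbol of arity $\ge2$). $T_n$ is the set of $\Omega$-terms in $x_1,\dots,x_n$ in which all $n$ variables occur. An identity is regular if the same variables occur on both sides. $\mathcal{S}$ is the variety of $\Omega$-algebras satisfying all regular identities; $X\mathcal{S}$ is the free $\mathcal{S}$-algebra over $X$. $\mathcal{V}\circ\mathcal{S}$ is the class of $\Omega$-algebras $A$ having a congruence $\theta$ with $A/\theta\in\mathcal{S}$ and every $\theta$-class (a subalgebra) in $\mathcal{V}$. The semilattice replica congruence of $A$ is the smallest congruence $\varrho$ with $A/\varrho\in\mathcal{S}$. Prolongation: for an identity $\sigma$ of the form $u(y_1,\dots,y_n)=v(y_1,\dots,y_n)$ and $m\ge1$, $\sigma^p_m$ is the set of identities $u(r_1,\dots,r_n)=v(r_1,\dots,r_n)$ obtained by substituting $r_i(x_1,\dots,x_m)$ for $y_i$,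 with $r_i$ ranging over $T_m$; $\sigma^p=\bigcup_m\sigma^p_m$; $\Sigma^p=\bigcup_{\sigma\in\Sigma}\sigma^p$. $\mathcal{V}^p$ is the variety defined by $\mathrm{Id}(\mathcal{V})^p$, where $\mathrm{Id}(\mathcal{V})$ is the set of all identities holding in $\mathcal{V}$. *)

theory Defs
  imports Main
begin

text \<open>A similarity type is given by an arity function ar on operation symbols of type 'o.\<close>

datatype ('o, 'v) trm = Var 'v | App 'o "('o, 'v) trm list"

definition plural :: "('o \<Rightarrow> nat) \<Rightarrow> bool" where
  "plural ar \<longleftrightarrow> (\<forall>f. ar f \<ge> 1) \<and> (\<exists>f. ar f \<ge> 2)"

fun wf_trm :: "('o \<Rightarrow> nat) \<Rightarrow> ('o, 'v) trm \<Rightarrow> bool" where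
  "wf_trm ar (Var v) = True"
| "wf_trm ar (App f ts) = (length ts = ar f \<and> (\<forall>t\<in>set ts. wf_trm ar t))"

primrec vars :: "('o, 'v) trm \<Rightarrow> 'v set" where
  "vars (Var v) = {v}"
| "vars (App f ts) = \<Union> (set (map vars ts))"

primrec eval :: "('o \<Rightarrow> 'a list \<Rightarrow> 'a) \<Rightarrow> ('v \<Rightarrow> 'a) \<Rightarrow> ('o, 'v) trm \<Rightarrow> 'a" where
  "eval F \<sigma> (Var v) = \<sigma> v"
| "eval F \<sigma> (App f ts) = F f (map (eval F \<sigma>) ts)"

definition subst :: "('v \<Rightarrow> ('o, 'w) trm) \<Rightarrow> ('o, 'v) trm \<Rightarrow> ('o, 'w) trm" where
  "subst r t = eval App r t"

type_synonym 'o ident = "('o, nat) trm \<times> ('o, nat) trm"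

definition closed :: "('o \<Rightarrow> nat) \<Rightarrow> 'a set \<Rightarrow> ('o \<Rightarrow> 'a list \<Rightarrow> 'a) \<Rightarrow> bool" where
  "closed ar A F \<longleftrightarrow> (\<forall>f xs. length xs = ar f \<and> set xs \<subseteq> A \<longrightarrow> F f xs \<in> A)"

definition satisfies :: "'a set \<Rightarrow> ('o \<Rightarrow> 'a list \<Rightarrow> 'a) \<Rightarrow> 'o ident \<Rightarrow> bool" where
  "satisfies A F e \<longleftrightarrow> (\<forall>\<sigma>. (\<forall>v. \<sigma> v \<in> A) \<longrightarrow> eval F \<sigma> (fst e) = eval F \<sigma> (snd e))"

definition models :: "'o ident set \<Rightarrow> 'a set \<Rightarrow> ('o \<Rightarrow> 'a list \<Rightarrow> 'a) \<Rightarrow> bool" where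
  "models E A F \<longleftrightarrow> (\<forall>e\<in>E. satisfies A F e)"

definition congruence :: "('o \<Rightarrow> nat) \<Rightarrow> 'a set \<Rightarrow> ('o \<Rightarrow> 'a list \<Rightarrow> 'a) \<Rightarrow> 'a rel \<Rightarrow> bool" where
  "congruence ar A F \<theta> \<longleftrightarrow> equiv A \<theta> \<and>
     (\<forall>f xs ys. length xs = ar f \<and> list_all2 (\<lambda>x y. (x, y) \<in> \<theta>) xs ys
        \<longrightarrow> (F f xs, F f ys) \<in> \<theta>)"

definition quot_op :: "'a rel \<Rightarrow> ('o \<Rightarrow> 'a list \<Rightarrow> 'a) \<Rightarrow> 'o \<Rightarrow> 'a set list \<Rightarrow> 'a set" where
  "quot_op \<theta> F f Cs = \<theta> `` {F f (map (\<lambda>C. SOME a. a \<in> C) Cs)}"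

definition iso :: "('o \<Rightarrow> nat) \<Rightarrow> 'a set \<Rightarrow> ('o \<Rightarrow> 'a list \<Rightarrow> 'a) \<Rightarrow> 'b set \<Rightarrow> ('o \<Rightarrow> 'b list \<Rightarrow> 'b)
    \<Rightarrow> ('a \<Rightarrow> 'b) \<Rightarrow> bool" where
  "iso ar A F B G h \<longleftrightarrow> bij_betw h A B \<and>
     (\<forall>f xs. length xs = ar f \<and> set xs \<subseteq> A \<longrightarrow> h (F f xs) = G f (map h xs))"

definition regular_ids :: "('o \<Rightarrow> nat) \<Rightarrow> 'o ident set" where
  "regular_ids ar = {(s, t). wf_trm ar s \<and> wf_trm ar t \<and> vars s = vars t}"

definition in_S :: "('o \<Rightarrow> nat) \<Rightarrow> 'a set \<Rightarrow> ('o \<Rightarrow> 'a list \<Rightarrow> 'a) \<Rightarrow> bool" where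
  "in_S ar A F \<longleftrightarrow> closed ar A F \<and> models (regular_ids ar) A F"

definition sl_replica :: "('o \<Rightarrow> nat) \<Rightarrow> 'a set \<Rightarrow> ('o \<Rightarrow> 'a list \<Rightarrow> 'a) \<Rightarrow> 'a rel \<Rightarrow> bool" where
  "sl_replica ar A F \<rho> \<longleftrightarrow> congruence ar A F \<rho> \<and> in_S ar (A // \<rho>) (quot_op \<rho> F) \<and>
     (\<forall>\<theta>. congruence ar A F \<theta> \<and> in_S ar (A // \<theta>) (quot_op \<theta> F) \<longrightarrow> \<rho> \<subseteq> \<theta>)"

definition in_Var :: "('o \<Rightarrow> nat) \<Rightarrow> 'o ident set \<Rightarrow> 'a set \<Rightarrow> ('o \<Rightarrow> 'a list \<Rightarrow> 'a) \<Rightarrow> bool" where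
  "in_Var ar E A F \<longleftrightarrow> closed ar A F \<and> models E A F"

definition in_V_circ_S :: "('o \<Rightarrow> nat) \<Rightarrow> 'o ident set \<Rightarrow> 'a set \<Rightarrow> ('o \<Rightarrow> 'a list \<Rightarrow> 'a) \<Rightarrow> bool" where
  "in_V_circ_S ar E A F \<longleftrightarrow> (\<exists>\<theta>. congruence ar A F \<theta> \<and> in_S ar (A // \<theta>) (quot_op \<theta> F) \<and>
      (\<forall>C\<in>A // \<theta>. in_Var ar E C F))"

definition T_m :: "('o \<Rightarrow> nat) \<Rightarrow> nat \<Rightarrow> ('o, nat) trm set" where
  "T_m ar m = {t. wf_trm ar t \<and> vars t = {1..m}}"

definition prolong :: "('o \<Rightarrow> nat) \<Rightarrow> 'o ident set \<Rightarrow> 'o ident set" where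
  "prolong ar E = {(subst r u, subst r v) | u v r m. (u, v) \<in> E \<and> m \<ge> 1 \<and>
      (\<forall>y \<in> vars u \<union> vars v. r y \<in> T_m ar m)}"

definition terms_over :: "('o \<Rightarrow> nat) \<Rightarrow> 'x set \<Rightarrow> ('o, 'x) trm set" where
  "terms_over ar X = {t. wf_trm ar t \<and> vars t \<subseteq> X}"

inductive deriv :: "('o \<Rightarrow> nat) \<Rightarrow> 'o ident set \<Rightarrow> 'x set \<Rightarrow> ('o, 'x) trm \<Rightarrow> ('o, 'x) trm \<Rightarrow> bool"
  for ar E X where
  ax: "(s, t) \<in> E \<Longrightarrow> (\<forall>v \<in> vars s \<union> vars t. r v \<in> terms_over ar X)
        \<Longrightarrow> deriv ar E X (subst r s) (subst r t)"
| refl: "t \<in> terms_over ar X \<Longrightarrow> deriv ar E X t t"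
| sym: "deriv ar E X s t \<Longrightarrow> deriv ar E X t s"
| trans: "deriv ar E X s t \<Longrightarrow> deriv ar E X t u \<Longrightarrow> deriv ar E X s u"
| cong: "length ts = ar f \<Longrightarrow> list_all2 (deriv ar E X) ts us \<Longrightarrow> deriv ar E X (App f ts) (App f us)"

definition free_rel :: "('o \<Rightarrow> nat) \<Rightarrow> 'o ident set \<Rightarrow> 'x set \<Rightarrow> ('o, 'x) trm rel" where
  "free_rel ar E X = {(s, t). deriv ar E X s t}"

definition free_carrier :: "('o \<Rightarrow> nat) \<Rightarrow> 'o ident set \<Rightarrow> 'x set \<Rightarrow> ('o, 'x) trm set set" where
  "free_carrier ar E X = terms_over ar X // free_rel ar E X"

definition free_op :: "('o \<Rightarrow> nat) \<Rightarrow> 'o ident set \<Rightarrow> 'x set \<Rightarrow> 'o \<Rightarrow> ('o, 'x) trm set list \<Rightarrow> ('o, 'x) trm set" where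
  "free_op ar E X = quot_op (free_rel ar E X) App"

end

theory Submission
  imports Defs
begin

text \<open>
  Since the type is plural, every identity of \<open>\<Sigma>\<^sup>p\<close> is regular, so terms that are equal
  in \<open>A = XW\<close> have the same variables. Sending the class of \<open>t\<close> in \<open>A\<close> to its class in
  \<open>XS\<close>, the set of all terms with the variables of \<open>t\<close>, is therefore a surjective
  homomorphism; its kernel \<open>\<rho>\<close> identifies classes of terms with equal variable sets, and
  \<open>A/\<rho> \<cong> XS\<close> by the homomorphism theorem. Any congruence with quotient in \<open>S\<close>
  identifies the two values of a regular identity and hence contains \<open>\<rho>\<close>, so \<open>\<rho>\<close> is
  the semilattice replica congruence.

  A \<open>\<rho>\<close>-class consists of classes of terms in a fixed finite nonempty set \<open>W\<close> of
  variables. After renaming \<open>W\<close> to \<open>{1..m}\<close>, substituting such terms into an identity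
  of \<open>\<Sigma>\<close> gives an identity of \<open>\<Sigma>\<^sup>p\<^sub>m\<close>, so the class satisfies \<open>\<Sigma>\<close>; it is a
  subalgebra because \<open>A/\<rho>\<close> satisfies the regular identities \<open>f(x,\<dots>,x) = x\<close>.
\<close>

section \<open>Terms and substitution\<close>

lemma subst_simps [simp]:
  "subst r (Var v) = r v"
  "subst r (App f ts) = App f (map (subst r) ts)"
  by (simp_all add: subst_def)

lemma vars_subst: "vars (subst r t) = (\<Union>v\<in>vars t. vars (r v))"
  by (induction t) auto

lemma wf_trm_subst:
  "wf_trm ar t \<Longrightarrow> \<forall>v\<in>vars t. wf_trm ar (r v) \<Longrightarrow> wf_trm ar (subst r t)"
  by (induction t) auto

lemma subst_cong: "\<forall>v\<in>vars t. r v = r' v \<Longrightarrow> subst r t = subst r' t"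
  by (induction t) auto

lemma subst_Var_id [simp]: "subst Var t = t"
  by (induction t) (auto simp: map_idI)

lemma subst_subst: "subst a (subst b t) = subst (\<lambda>v. subst a (b v)) t"
  by (induction t) auto

lemma finite_vars: "finite (vars t)"
  by (induction t) auto

lemma vars_nonempty: "plural ar \<Longrightarrow> wf_trm ar t \<Longrightarrow> vars t \<noteq> {}"
proof (induction t)
  case (App f ts)
  then have "ts \<noteq> []"
    by (auto simp: plural_def dest: spec[of _ f])
  with App show ?case
    by (cases ts) auto
qed simp

section \<open>Homomorphisms, quotients and kernels\<close>

definition hom :: "('o \<Rightarrow> nat) \<Rightarrow> 'a set \<Rightarrow> ('o \<Rightarrow> 'a list \<Rightarrow> 'a) \<Rightarrow> 'b set
    \<Rightarrow> ('o \<Rightarrow> 'b list \<Rightarrow> 'b) \<Rightarrow> ('a \<Rightarrow> 'b) \<Rightarrow> bool" where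
  "hom ar A F B G h \<longleftrightarrow> h ` A \<subseteq> B \<and>
     (\<forall>f xs. length xs = ar f \<and> set xs \<subseteq> A \<longrightarrow> h (F f xs) = G f (map h xs))"

lemma iso_imp_hom: "iso ar A F B G h \<Longrightarrow> hom ar A F B G h"
  by (auto simp: iso_def hom_def bij_betw_def)

lemma eval_closed:
  "closed ar A F \<Longrightarrow> wf_trm ar t \<Longrightarrow> \<forall>v\<in>vars t. \<sigma> v \<in> A \<Longrightarrow> eval F \<sigma> t \<in> A"
proof (induction t)
  case (App f ts)
  then have "set (map (eval F \<sigma>) ts) \<subseteq> A"
    by auto
  with App.prems show ?case
    by (simp add: closed_def)
qed simp

lemma eval_hom:
  assumes "hom ar A F B G h" and "closed ar A F"
  shows "wf_trm ar t \<Longrightarrow> \<forall>v\<in>vars t. \<sigma> v \<in> A \<Longrightarrow>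
    h (eval F \<sigma> t) = eval G (\<lambda>v. h (\<sigma> v)) t"
proof (induction t)
  case (App f ts)
  have "set (map (eval F \<sigma>) ts) \<subseteq> A"
    using App.prems by (fastforce intro: eval_closed[OF assms(2)])
  then have "h (eval F \<sigma> (App f ts)) = G f (map h (map (eval F \<sigma>) ts))"
    using assms(1) App.prems by (simp add: hom_def)
  also have "\<dots> = eval G (\<lambda>v. h (\<sigma> v)) (App f ts)"
    using App by (simp cong: map_cong)
  finally show ?case .
qed simp

lemma models_iso:
  assumes "iso ar A F B G h" and "closed ar A F" and "models E B G"
    and "\<forall>(u, v)\<in>E. wf_trm ar u \<and> wf_trm ar v"
  shows "models E A F"
  unfolding models_def satisfies_def
proof (clarify)
  fix u v and \<sigma> :: "nat \<Rightarrow> _"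
  assume uv: "(u, v) \<in> E" and \<sigma>: "\<forall>n. \<sigma> n \<in> A"
  have wf: "wf_trm ar u" "wf_trm ar v"
    using uv assms(4) by auto
  have hom: "hom ar A F B G h"
    using assms(1) by (rule iso_imp_hom)
  then have "\<forall>n. h (\<sigma> n) \<in> B"
    using \<sigma> by (auto simp: hom_def)
  with assms(3) uv have "eval G (\<lambda>n. h (\<sigma> n)) u = eval G (\<lambda>n. h (\<sigma> n)) v"
    by (auto simp: models_def satisfies_def)
  with wf \<sigma> have "h (eval F \<sigma> u) = h (eval F \<sigma> v)"
    by (simp add: eval_hom[OF hom assms(2)])
  moreover have "eval F \<sigma> u \<in> A" "eval F \<sigma> v \<in> A"
    using wf \<sigma> by (simp_all add: eval_closed[OF assms(2)])
  ultimately show "eval F \<sigma> (fst (u, v)) = eval F \<sigma> (snd (u, v))"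
    using assms(1) by (auto simp: iso_def bij_betw_def dest: inj_onD)
qed

lemma hom_quotient_map:
  assumes "congruence ar A F \<theta>"
  shows "hom ar A F (A // \<theta>) (quot_op \<theta> F) (\<lambda>a. \<theta> `` {a})"
  unfolding hom_def
proof (intro conjI allI impI)
  show "(\<lambda>a. \<theta> `` {a}) ` A \<subseteq> A // \<theta>"
    by (auto intro: quotientI)
next
  fix f xs assume xs: "length xs = ar f \<and> set xs \<subseteq> A"
  have equiv: "equiv A \<theta>"
    using assms by (simp add: congruence_def)
  let ?reps = "map (\<lambda>x. SOME a. a \<in> \<theta> `` {x}) xs"
  have "list_all2 (\<lambda>x y. (x, y) \<in> \<theta>) xs ?reps"
  proof (rule list_all2_all_nthI)
    fix n assume "n < length xs"
    with xs have "xs ! n \<in> A"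
      by auto
    with equiv have "xs ! n \<in> \<theta> `` {xs ! n}"
      by (rule equiv_class_self)
    then have "(SOME a. a \<in> \<theta> `` {xs ! n}) \<in> \<theta> `` {xs ! n}"
      by (rule someI)
    then show "(xs ! n, ?reps ! n) \<in> \<theta>"
      using \<open>n < length xs\<close> by simp
  qed simp
  with assms xs have "(F f xs, F f ?reps) \<in> \<theta>"
    by (simp add: congruence_def)
  with equiv show "\<theta> `` {F f xs} = quot_op \<theta> F f (map (\<lambda>a. \<theta> `` {a}) xs)"
    by (simp add: quot_op_def comp_def equiv_class_eq)
qed

lemma eval_quot_op:
  assumes "closed ar A F" and "congruence ar A F \<theta>"
    and "wf_trm ar t" and "\<forall>v\<in>vars t. \<sigma> v \<in> A"
  shows "eval (quot_op \<theta> F) (\<lambda>v. \<theta> `` {\<sigma> v}) t = \<theta> `` {eval F \<sigma> t}"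
  using eval_hom[OF hom_quotient_map[OF assms(2)] assms(1,3,4)] by simp

lemma some_in_quotient_class:
  assumes "equiv A \<theta>" and "C \<in> A // \<theta>"
  shows "(SOME a. a \<in> C) \<in> A"
proof -
  have "(SOME a. a \<in> C) \<in> C"
    using in_quotient_imp_non_empty[OF assms] by (simp add: some_in_eq)
  then show ?thesis
    using in_quotient_imp_subset[OF assms] by blast
qed

lemma closed_quotient:
  assumes "closed ar A F" and "congruence ar A F \<theta>"
  shows "closed ar (A // \<theta>) (quot_op \<theta> F)"
  unfolding closed_def
proof (intro allI impI)
  fix f Cs assume Cs: "length Cs = ar f \<and> set Cs \<subseteq> A // \<theta>"
  have "equiv A \<theta>"
    using assms(2) by (simp add: congruence_def)
  with Cs have "set (map (\<lambda>C. SOME a. a \<in> C) Cs) \<subseteq> A"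
    by (auto intro: some_in_quotient_class)
  with Cs assms(1) have "F f (map (\<lambda>C. SOME a. a \<in> C) Cs) \<in> A"
    by (simp add: closed_def)
  then show "quot_op \<theta> F f Cs \<in> A // \<theta>"
    by (simp add: quot_op_def quotientI)
qed

lemma quotient_list_representatives:
  assumes "set Cs \<subseteq> A // \<theta>"
  obtains as where "set as \<subseteq> A" and "Cs = map (\<lambda>a. \<theta> `` {a}) as"
proof -
  have "\<exists>as. set as \<subseteq> A \<and> Cs = map (\<lambda>a. \<theta> `` {a}) as"
    using assms
  proof (induction Cs)
    case (Cons C Cs)
    then obtain as where "set as \<subseteq> A" "Cs = map (\<lambda>a. \<theta> `` {a}) as"
      by auto
    moreover obtain a where "a \<in> A" "C = \<theta> `` {a}"
      using Cons.prems by (auto elim!: quotientE)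
    ultimately show ?case
      by (intro exI[of _ "a # as"]) simp
  qed simp
  then show ?thesis
    using that by blast
qed

lemma congruence_kernel:
  assumes "closed ar A F" and "hom ar A F B G h"
  shows "congruence ar A F (kernel h \<inter> A \<times> A)"
  unfolding congruence_def
proof (intro conjI allI impI)
  show "equiv A (kernel h \<inter> A \<times> A)"
    by (auto simp: equiv_def refl_on_def sym_def trans_def kernel_def)
next
  fix f xs ys
  assume xsys: "length xs = ar f \<and> list_all2 (\<lambda>x y. (x, y) \<in> kernel h \<inter> A \<times> A) xs ys"
  have "list_all2 (\<lambda>x y. (x, y) \<in> kernel h \<inter> A \<times> A) xs ys \<Longrightarrow>
      set xs \<subseteq> A \<and> set ys \<subseteq> A \<and> map h xs = map h ys"
    by (induction rule: list_all2_induct) (auto simp: kernel_def)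
  with xsys have "set xs \<subseteq> A" "set ys \<subseteq> A" "map h xs = map h ys" "length ys = ar f"
    by (auto dest: list_all2_lengthD)
  with xsys assms show "(F f xs, F f ys) \<in> kernel h \<inter> A \<times> A"
    by (auto simp: hom_def closed_def kernel_def)
qed

lemma iso_quotient_kernel:
  assumes "closed ar A F" and "hom ar A F B G h" and "h ` A = B"
  shows "iso ar (A // (kernel h \<inter> A \<times> A)) (quot_op (kernel h \<inter> A \<times> A) F) B G
           (\<lambda>K. h (SOME a. a \<in> K))"
proof -
  let ?\<rho> = "kernel h \<inter> A \<times> A"
  have equiv: "equiv A ?\<rho>"
    using congruence_kernel[OF assms(1,2)] by (simp add: congruence_def)
  have induced: "h (SOME b. b \<in> ?\<rho> `` {a}) = h a" if "a \<in> A" for a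
  proof -
    have same_image: "h c = h a" if "c \<in> ?\<rho> `` {a}" for c
      using that by (auto simp: kernel_def)
    have "a \<in> ?\<rho> `` {a}"
      using equiv that by (rule equiv_class_self)
    then have "(SOME b. b \<in> ?\<rho> `` {a}) \<in> ?\<rho> `` {a}"
      by (rule someI)
    then show ?thesis
      by (rule same_image)
  qed
  have inj: "inj_on (\<lambda>K. h (SOME a. a \<in> K)) (A // ?\<rho>)"
  proof (rule inj_onI)
    fix K L assume "K \<in> A // ?\<rho>" "L \<in> A // ?\<rho>"
      and hKL: "h (SOME a. a \<in> K) = h (SOME a. a \<in> L)"
    then obtain a b where "a \<in> A" "b \<in> A" "K = ?\<rho> `` {a}" "L = ?\<rho> `` {b}"
      by (auto elim!: quotientE)
    with hKL induced have "(a, b) \<in> ?\<rho>"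
      by (simp add: kernel_def)
    with equiv show "K = L"
      using \<open>K = ?\<rho> `` {a}\<close> \<open>L = ?\<rho> `` {b}\<close> by (simp add: equiv_class_eq)
  qed
  have onto: "(\<lambda>K. h (SOME a. a \<in> K)) ` (A // ?\<rho>) = B"
  proof -
    have "(\<lambda>K. h (SOME a. a \<in> K)) ` (A // ?\<rho>) =
        (\<lambda>a. h (SOME b. b \<in> ?\<rho> `` {a})) ` A"
      by (simp only: quotient_def UNION_singleton_eq_range image_image)
    also have "\<dots> = h ` A"
      by (rule image_cong[OF HOL.refl induced])
    finally show ?thesis
      using assms(3) by simp
  qed
  have "h (SOME a. a \<in> quot_op ?\<rho> F f Ks) = G f (map (\<lambda>K. h (SOME a. a \<in> K)) Ks)"
    if Ks: "length Ks = ar f" "set Ks \<subseteq> A // ?\<rho>" for f Ks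
  proof -
    let ?reps = "map (\<lambda>K. SOME a. a \<in> K) Ks"
    from Ks equiv have reps: "set ?reps \<subseteq> A" "length ?reps = ar f"
      by (auto intro: some_in_quotient_class)
    with assms(1) have "F f ?reps \<in> A"
      by (simp add: closed_def)
    then have "h (SOME a. a \<in> quot_op ?\<rho> F f Ks) = h (F f ?reps)"
      unfolding quot_op_def by (rule induced)
    also have "\<dots> = G f (map h ?reps)"
      using assms(2) reps by (simp add: hom_def)
    finally show ?thesis
      by (simp add: comp_def)
  qed
  with inj onto show ?thesis
    by (simp add: iso_def bij_betw_def)
qed

lemma in_S_idempotent:
  assumes "plural ar" and "in_S ar B G" and "b \<in> B"
  shows "G f (replicate (ar f) b) = b"
proof -
  let ?idem = "App f (replicate (ar f) (Var 0))"
  have "ar f \<ge> 1"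
    using assms(1) by (simp add: plural_def)
  then have "(?idem, Var 0) \<in> regular_ids ar"
    by (simp add: regular_ids_def)
  with assms(2) have "satisfies B G (?idem, Var 0)"
    by (simp add: in_S_def models_def)
  with assms(3) show ?thesis
    unfolding satisfies_def by (auto dest: spec[where x = "\<lambda>_. b"])
qed

lemma closed_congruence_class_in_S:
  assumes "plural ar" and "closed ar A F" and "congruence ar A F \<theta>"
    and "in_S ar (A // \<theta>) (quot_op \<theta> F)" and "K \<in> A // \<theta>"
  shows "closed ar K F"
  unfolding closed_def
proof (intro allI impI)
  fix f xs assume xs: "length xs = ar f \<and> set xs \<subseteq> K"
  have equiv: "equiv A \<theta>"
    using assms(3) by (simp add: congruence_def)
  have "K \<subseteq> A"
    using equiv assms(5) by (rule in_quotient_imp_subset)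
  with xs have xsA: "set xs \<subseteq> A"
    by blast
  have "\<theta> `` {x} = K" if "x \<in> set xs" for x
  proof -
    obtain a where "K = \<theta> `` {a}"
      using assms(5) by (rule quotientE)
    moreover have "(a, x) \<in> \<theta>"
      using xs that \<open>K = \<theta> `` {a}\<close> by auto
    ultimately show ?thesis
      using equiv by (simp add: equiv_class_eq)
  qed
  then have "map (\<lambda>x. \<theta> `` {x}) xs = map (\<lambda>_. K) xs"
    by simp
  also have "\<dots> = replicate (ar f) K"
    using xs by (simp add: map_replicate_const)
  finally have "map (\<lambda>x. \<theta> `` {x}) xs = replicate (ar f) K" .
  then have "\<theta> `` {F f xs} = quot_op \<theta> F f (replicate (ar f) K)"
    using hom_quotient_map[OF assms(3)] xs xsA by (simp add: hom_def)
  also have "\<dots> = K"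
    using in_S_idempotent[OF assms(1,4,5)] .
  finally have class_eq: "\<theta> `` {F f xs} = K" .
  have "F f xs \<in> A"
    using assms(2) xs xsA by (simp add: closed_def)
  with equiv have "F f xs \<in> \<theta> `` {F f xs}"
    by (rule equiv_class_self)
  then show "F f xs \<in> K"
    unfolding class_eq .
qed

section \<open>Free algebras\<close>

lemma closed_terms_over: "closed ar (terms_over ar X) App"
  by (auto simp: closed_def terms_over_def)

context
  fixes ar :: "'o \<Rightarrow> nat" and E :: "'o ident set" and X :: "'x set"
  assumes wf_E: "\<forall>(u, v)\<in>E. wf_trm ar u \<and> wf_trm ar v"
begin

lemma deriv_terms_over: "deriv ar E X s t \<Longrightarrow> s \<in> terms_over ar X \<and> t \<in> terms_over ar X"
proof (induction rule: deriv.induct)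
  case (ax s t r)
  with wf_E show ?case
    by (auto simp: terms_over_def vars_subst intro!: wf_trm_subst)
next
  case (cong ts f us)
  then have "set ts \<subseteq> terms_over ar X" "set us \<subseteq> terms_over ar X" "length us = length ts"
    by (auto simp: list_all2_conv_all_nth in_set_conv_nth)
  with cong.hyps(1) show ?case
    by (auto simp: terms_over_def)
qed auto

lemma congruence_free_rel: "congruence ar (terms_over ar X) App (free_rel ar E X)"
  unfolding congruence_def
proof (intro conjI allI impI)
  show "equiv (terms_over ar X) (free_rel ar E X)"
    using deriv_terms_over
    by (auto simp: equiv_def refl_on_def sym_def trans_def free_rel_def intro: deriv.intros)
qed (auto simp: free_rel_def intro: deriv.cong)

lemma equiv_free_rel: "equiv (terms_over ar X) (free_rel ar E X)"
  using congruence_free_rel by (simp add: congruence_def)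

lemma closed_free: "closed ar (free_carrier ar E X) (free_op ar E X)"
  unfolding free_carrier_def free_op_def
  by (rule closed_quotient[OF closed_terms_over congruence_free_rel])

lemma free_op_classes:
  assumes "length ts = ar f" and "set ts \<subseteq> terms_over ar X"
  shows "free_op ar E X f (map (\<lambda>t. free_rel ar E X `` {t}) ts) = free_rel ar E X `` {App f ts}"
  using hom_quotient_map[OF congruence_free_rel] assms by (simp add: hom_def free_op_def)

lemma eval_free:
  assumes "wf_trm ar t" and "\<forall>v\<in>vars t. r v \<in> terms_over ar X"
  shows "eval (free_op ar E X) (\<lambda>v. free_rel ar E X `` {r v}) t = free_rel ar E X `` {subst r t}"
  unfolding free_op_def subst_def
  by (rule eval_quot_op[OF closed_terms_over congruence_free_rel assms])

lemma free_models: "models E (free_carrier ar E X) (free_op ar E X)"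
  unfolding models_def satisfies_def
proof (clarify)
  fix u v and \<sigma> :: "nat \<Rightarrow> _"
  assume uv: "(u, v) \<in> E" and \<sigma>: "\<forall>n. \<sigma> n \<in> free_carrier ar E X"
  define r where "r n = (SOME t. t \<in> \<sigma> n)" for n
  have r: "r n \<in> terms_over ar X" and \<sigma>_eq: "\<sigma> n = free_rel ar E X `` {r n}" for n
  proof -
    obtain t where "t \<in> terms_over ar X" "\<sigma> n = free_rel ar E X `` {t}"
      using \<sigma> by (auto simp: free_carrier_def elim!: quotientE)
    moreover from this have "t \<in> \<sigma> n"
      using equiv_class_self[OF equiv_free_rel] by simp
    then have "r n \<in> \<sigma> n"
      unfolding r_def by (rule someI)
    ultimately have t_r: "(t, r n) \<in> free_rel ar E X"
      by simp
    then show "r n \<in> terms_over ar X"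
      using deriv_terms_over by (simp add: free_rel_def)
    show "\<sigma> n = free_rel ar E X `` {r n}"
      using equiv_class_eq[OF equiv_free_rel t_r] \<open>\<sigma> n = free_rel ar E X `` {t}\<close> by simp
  qed
  have "(subst r u, subst r v) \<in> free_rel ar E X"
    using uv r by (auto simp: free_rel_def intro: deriv.ax)
  then have "free_rel ar E X `` {subst r u} = free_rel ar E X `` {subst r v}"
    by (rule equiv_class_eq[OF equiv_free_rel])
  with uv wf_E r
  show "eval (free_op ar E X) \<sigma> (fst (u, v)) = eval (free_op ar E X) \<sigma> (snd (u, v))"
    by (auto simp: \<sigma>_eq[abs_def] eval_free)
qed

end

section \<open>Regular identities and prolongation\<close>

lemma regular_identities_wf: "E \<subseteq> regular_ids ar \<Longrightarrow> \<forall>(u, v)\<in>E. wf_trm ar u \<and> wf_trm ar v"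
  by (auto simp: regular_ids_def)

lemma deriv_vars_eq:
  assumes "E \<subseteq> regular_ids ar"
  shows "deriv ar E X s t \<Longrightarrow> vars s = vars t"
proof (induction rule: deriv.induct)
  case (ax s t r)
  with assms show ?case
    by (auto simp: regular_ids_def vars_subst)
next
  case (cong ts f us)
  from cong.IH have "map vars ts = map vars us"
    by (induction rule: list_all2_induct) auto
  then show ?case
    by (metis set_map vars.simps(2))
qed auto

lemma nat_renaming:
  assumes "finite V" and "V \<subseteq> X" and "t\<^sub>0 \<in> terms_over ar X"
  obtains g :: "'x \<Rightarrow> nat" and r where "g ` V = {1..card V}" and "\<forall>v\<in>V. r (g v) = Var v"
    and "\<forall>n. r n \<in> terms_over ar X"
proof -
  obtain g where g: "bij_betw g V {1..card V}"
    using finite_same_card_bij[OF assms(1) finite_atLeastAtMost[of 1 "card V"]] by auto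
  \<comment> \<open>\<open>t\<^sub>0\<close> is only a default value keeping \<open>r\<close> inside \<open>terms_over ar X\<close>\<close>
  define r where "r n = (if n \<in> {1..card V} then Var (inv_into V g n) else t\<^sub>0)" for n
  have "\<forall>v\<in>V. r (g v) = Var v"
    using g by (auto simp: r_def bij_betw_def inv_into_f_f)
  moreover have "\<forall>n. r n \<in> terms_over ar X"
    using g assms(2,3) by (auto simp: r_def terms_over_def bij_betw_def inv_into_into)
  moreover have "g ` V = {1..card V}"
    using g by (simp add: bij_betw_def)
  ultimately show ?thesis
    using that by blast
qed

lemma subst_renaming_inverse:
  "\<forall>v\<in>vars u. r (g v) = Var v \<Longrightarrow> subst r (subst (Var \<circ> g) u) = u"
proof -
  assume "\<forall>v\<in>vars u. r (g v) = Var v"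
  then have "subst (\<lambda>v. subst r (Var (g v))) u = subst Var u"
    by (intro subst_cong) simp
  then show ?thesis
    by (simp add: subst_subst)
qed

lemma regular_pattern:
  assumes "s \<in> terms_over ar X" and "t \<in> terms_over ar X" and "vars s = vars t"
  obtains s' t' r where "(s', t') \<in> regular_ids ar" and "subst r s' = s" and "subst r t' = t"
    and "\<forall>n. r n \<in> terms_over ar X"
proof -
  have "vars s \<subseteq> X"
    using assms(1) by (simp add: terms_over_def)
  then obtain g r where "g ` vars s = {1..card (vars s)}" and g: "\<forall>v\<in>vars s. r (g v) = Var v"
    and r: "\<forall>n. r n \<in> terms_over ar X"
    by (rule nat_renaming[OF finite_vars _ assms(1)])
  have "(subst (Var \<circ> g) s, subst (Var \<circ> g) t) \<in> regular_ids ar"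
    using assms by (auto simp: regular_ids_def terms_over_def vars_subst intro!: wf_trm_subst)
  moreover have "subst r (subst (Var \<circ> g) s) = s" "subst r (subst (Var \<circ> g) t) = t"
    using g assms(3) by (simp_all add: subst_renaming_inverse)
  ultimately show ?thesis
    using r that by blast
qed

lemma free_rel_regular_ids_class:
  assumes "s \<in> terms_over ar X"
  shows "free_rel ar (regular_ids ar) X `` {s} = {t \<in> terms_over ar X. vars t = vars s}"
proof (intro equalityI subsetI)
  fix t assume "t \<in> free_rel ar (regular_ids ar) X `` {s}"
  then have st: "deriv ar (regular_ids ar) X s t"
    by (simp add: free_rel_def)
  have "t \<in> terms_over ar X"
    using deriv_terms_over[OF regular_identities_wf[OF order_refl] st] by simp
  moreover have "vars s = vars t"
    using deriv_vars_eq[OF order_refl st] .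
  ultimately show "t \<in> {t \<in> terms_over ar X. vars t = vars s}"
    by simp
next
  fix t assume "t \<in> {t \<in> terms_over ar X. vars t = vars s}"
  then have "t \<in> terms_over ar X" "vars s = vars t"
    by simp_all
  then obtain s' t' r where "(s', t') \<in> regular_ids ar" "subst r s' = s" "subst r t' = t"
    "\<forall>n. r n \<in> terms_over ar X"
    by (rule regular_pattern[OF assms])
  then have "deriv ar (regular_ids ar) X s t"
    using deriv.ax[of s' t' "regular_ids ar" r ar X] by simp
  then show "t \<in> free_rel ar (regular_ids ar) X `` {s}"
    by (simp add: free_rel_def)
qed

lemma prolong_regular:
  assumes "plural ar" and "\<forall>(u, v)\<in>\<Sigma>. wf_trm ar u \<and> wf_trm ar v"
  shows "prolong ar \<Sigma> \<subseteq> regular_ids ar"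
proof (clarsimp simp: prolong_def)
  fix u v r m assume uv: "(u, v) \<in> \<Sigma>" and r: "\<forall>y\<in>vars u \<union> vars v. r y \<in> T_m ar m"
  have wf: "wf_trm ar u" "wf_trm ar v"
    using uv assms(2) by auto
  with assms(1) have "vars u \<noteq> {}" "vars v \<noteq> {}"
    by (simp_all add: vars_nonempty)
  with r have "vars (subst r u) = {1..m}" "vars (subst r v) = {1..m}"
    by (auto simp: vars_subst T_m_def)
  with wf r show "(subst r u, subst r v) \<in> regular_ids ar"
    by (auto simp: regular_ids_def T_m_def intro!: wf_trm_subst)
qed

lemma deriv_prolong_instance:
  assumes uv: "(u, v) \<in> \<Sigma>" and W: "finite W" "W \<noteq> {}"
    and rep: "\<forall>n. rep n \<in> terms_over ar X \<and> vars (rep n) = W"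
  shows "deriv ar (prolong ar \<Sigma>) X (subst rep u) (subst rep v)"
proof -
  have "W \<subseteq> X"
    using rep by (auto simp: terms_over_def)
  then obtain g r where g: "g ` W = {1..card W}" and r_g: "\<forall>w\<in>W. r (g w) = Var w"
    and r: "\<forall>n. r n \<in> terms_over ar X"
    using nat_renaming[OF W(1)] rep by blast
  define r' where "r' n = subst (Var \<circ> g) (rep n)" for n
  have "r' n \<in> T_m ar (card W)" for n
    using rep g by (auto simp: r'_def T_m_def terms_over_def vars_subst intro!: wf_trm_subst)
  moreover have "card W \<ge> 1"
    using W by (simp add: Suc_le_eq card_gt_0_iff)
  ultimately have "(subst r' u, subst r' v) \<in> prolong ar \<Sigma>"
    unfolding prolong_def using uv by blast
  then have "deriv ar (prolong ar \<Sigma>) X (subst r (subst r' u)) (subst r (subst r' v))"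
    using r by (auto intro: deriv.ax)
  moreover have "subst r (r' n) = rep n" for n
    unfolding r'_def using rep r_g by (simp add: subst_renaming_inverse)
  ultimately show ?thesis
    by (simp add: subst_subst)
qed

section \<open>The semilattice replica of a free algebra\<close>

lemma S_congruence_relates_same_vars:
  assumes wf_E: "\<forall>(u, v)\<in>E. wf_trm ar u \<and> wf_trm ar v"
    and \<theta>: "congruence ar (free_carrier ar E X) (free_op ar E X) \<theta>"
    and S: "in_S ar (free_carrier ar E X // \<theta>) (quot_op \<theta> (free_op ar E X))"
    and st: "s \<in> terms_over ar X" "t \<in> terms_over ar X" "vars s = vars t"
  shows "(free_rel ar E X `` {s}, free_rel ar E X `` {t}) \<in> \<theta>"
proof -
  obtain s' t' r where reg: "(s', t') \<in> regular_ids ar" and "subst r s' = s" "subst r t' = t"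
    and r: "\<forall>n. r n \<in> terms_over ar X"
    using regular_pattern[OF st] .
  let ?\<sigma> = "\<lambda>n. free_rel ar E X `` {r n}"
  have \<sigma>: "\<forall>n. ?\<sigma> n \<in> free_carrier ar E X"
    using r by (simp add: free_carrier_def quotientI)
  have eval_classes: "eval (quot_op \<theta> (free_op ar E X)) (\<lambda>n. \<theta> `` {?\<sigma> n}) w =
      \<theta> `` {free_rel ar E X `` {subst r w}}" if "wf_trm ar w" for w
  proof -
    have "\<forall>v\<in>vars w. r v \<in> terms_over ar X"
      using r by blast
    with \<sigma> show ?thesis
      by (simp add: eval_quot_op[OF closed_free[OF wf_E] \<theta> that] eval_free[OF wf_E that])
  qed
  have "\<forall>n. \<theta> `` {?\<sigma> n} \<in> free_carrier ar E X // \<theta>"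
    using \<sigma> by (simp add: quotientI)
  with S reg have "eval (quot_op \<theta> (free_op ar E X)) (\<lambda>n. \<theta> `` {?\<sigma> n}) s'
      = eval (quot_op \<theta> (free_op ar E X)) (\<lambda>n. \<theta> `` {?\<sigma> n}) t'"
    by (auto simp: in_S_def models_def satisfies_def)
  with reg eval_classes have "\<theta> `` {free_rel ar E X `` {s}} = \<theta> `` {free_rel ar E X `` {t}}"
    using \<open>subst r s' = s\<close> \<open>subst r t' = t\<close> by (auto simp: regular_ids_def)
  moreover have "free_rel ar E X `` {s} \<in> free_carrier ar E X"
    and "free_rel ar E X `` {t} \<in> free_carrier ar E X"
    using st by (simp_all add: free_carrier_def quotientI)
  moreover have "equiv (free_carrier ar E X) \<theta>"
    using \<theta> by (simp add: congruence_def)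
  ultimately show ?thesis
    by (blast intro: eq_equiv_class)
qed

text \<open>
  The natural map \<open>XW \<rightarrow> XS\<close>; by free_rel_regular_ids_class it sends the
  class of \<open>t\<close> to the set of all terms over \<open>X\<close> with the variables of \<open>t\<close>.
\<close>

definition regular_closure :: "('o \<Rightarrow> nat) \<Rightarrow> 'x set \<Rightarrow> ('o, 'x) trm set \<Rightarrow> ('o, 'x) trm set" where
  "regular_closure ar X C = free_rel ar (regular_ids ar) X `` C"

abbreviation replica_kernel :: "('o \<Rightarrow> nat) \<Rightarrow> 'o ident set \<Rightarrow> 'x set \<Rightarrow> ('o, 'x) trm set rel"
  where "replica_kernel ar E X \<equiv>
    kernel (regular_closure ar X) \<inter> free_carrier ar E X \<times> free_carrier ar E X"

context
  fixes ar :: "'o \<Rightarrow> nat" and E :: "'o ident set" and X :: "'x set"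
  assumes E_regular: "E \<subseteq> regular_ids ar"
begin

lemma regular_closure_class:
  assumes s: "s \<in> terms_over ar X"
  shows "regular_closure ar X (free_rel ar E X `` {s}) = free_rel ar (regular_ids ar) X `` {s}"
proof -
  have "\<forall>t\<in>free_rel ar E X `` {s}.
      free_rel ar (regular_ids ar) X `` {t} = free_rel ar (regular_ids ar) X `` {s}"
  proof
    fix t assume "t \<in> free_rel ar E X `` {s}"
    then have st: "deriv ar E X s t"
      by (simp add: free_rel_def)
    then have "t \<in> terms_over ar X"
      using deriv_terms_over[OF regular_identities_wf[OF E_regular]] by blast
    with s deriv_vars_eq[OF E_regular st]
    show "free_rel ar (regular_ids ar) X `` {t} = free_rel ar (regular_ids ar) X `` {s}"
      by (simp add: free_rel_regular_ids_class)
  qed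
  moreover have "s \<in> free_rel ar E X `` {s}"
    using equiv_free_rel[OF regular_identities_wf[OF E_regular]] s by (rule equiv_class_self)
  ultimately show ?thesis
    unfolding regular_closure_def by (subst Image_eq_UN) (rule UN_constant_eq[rotated])
qed

lemma regular_closure_onto:
  "regular_closure ar X ` free_carrier ar E X = free_carrier ar (regular_ids ar) X"
  unfolding free_carrier_def quotient_def
  by (simp only: UNION_singleton_eq_range image_image regular_closure_class cong: image_cong)

lemma hom_regular_closure:
  "hom ar (free_carrier ar E X) (free_op ar E X)
     (free_carrier ar (regular_ids ar) X) (free_op ar (regular_ids ar) X) (regular_closure ar X)"
  unfolding hom_def
proof (intro conjI allI impI)
  show "regular_closure ar X ` free_carrier ar E X \<subseteq> free_carrier ar (regular_ids ar) X"
    unfolding regular_closure_onto ..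
next
  fix f Cs assume Cs: "length Cs = ar f \<and> set Cs \<subseteq> free_carrier ar E X"
  then obtain ts
    where ts: "set ts \<subseteq> terms_over ar X" "Cs = map (\<lambda>t. free_rel ar E X `` {t}) ts"
    unfolding free_carrier_def by (blast elim: quotient_list_representatives)
  with Cs have "length ts = ar f" "App f ts \<in> terms_over ar X"
    by (auto simp: terms_over_def)
  with ts have "regular_closure ar X (free_op ar E X f Cs) = free_rel ar (regular_ids ar) X `` {App f ts}"
    by (simp add: free_op_classes[OF regular_identities_wf[OF E_regular]] regular_closure_class)
  also have "\<dots> =
      free_op ar (regular_ids ar) X f (map (\<lambda>t. free_rel ar (regular_ids ar) X `` {t}) ts)"
    using ts \<open>length ts = ar f\<close>
    by (simp add: free_op_classes[OF regular_identities_wf[OF order_refl]])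
  also have "map (\<lambda>t. free_rel ar (regular_ids ar) X `` {t}) ts = map (regular_closure ar X) Cs"
    unfolding ts(2) map_map comp_def
    by (rule map_cong) (use ts(1) in \<open>auto simp: regular_closure_class\<close>)
  finally show "regular_closure ar X (free_op ar E X f Cs) =
      free_op ar (regular_ids ar) X f (map (regular_closure ar X) Cs)" .
qed

lemma kernel_regular_closure_iff:
  assumes "s \<in> terms_over ar X" and "t \<in> terms_over ar X"
  shows "(free_rel ar E X `` {s}, free_rel ar E X `` {t}) \<in> kernel (regular_closure ar X)
    \<longleftrightarrow> vars s = vars t"
  using assms by (auto simp: kernel_def regular_closure_class free_rel_regular_ids_class)

lemma replica_kernel_class_vars:
  assumes "K \<in> free_carrier ar E X // replica_kernel ar E X"
  obtains s where "s \<in> terms_over ar X"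
    and "\<forall>D\<in>K. \<exists>t. t \<in> terms_over ar X \<and> vars t = vars s \<and> D = free_rel ar E X `` {t}"
proof -
  obtain C where C_class: "C \<in> free_carrier ar E X" and K: "K = replica_kernel ar E X `` {C}"
    using assms by (rule quotientE)
  obtain s where s: "s \<in> terms_over ar X" and C: "C = free_rel ar E X `` {s}"
    using C_class unfolding free_carrier_def by (rule quotientE)
  have "\<exists>t. t \<in> terms_over ar X \<and> vars t = vars s \<and> D = free_rel ar E X `` {t}" if "D \<in> K" for D
  proof -
    have D_class: "D \<in> free_carrier ar E X" and CD: "(C, D) \<in> kernel (regular_closure ar X)"
      using that K by auto
    obtain t where t: "t \<in> terms_over ar X" "D = free_rel ar E X `` {t}"
      using D_class unfolding free_carrier_def by (rule quotientE)
    with CD have "vars s = vars t"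
      using kernel_regular_closure_iff[OF s] C by simp
    with t show ?thesis
      by blast
  qed
  with s show ?thesis
    using that by blast
qed

lemma congruence_replica_kernel:
  "congruence ar (free_carrier ar E X) (free_op ar E X) (replica_kernel ar E X)"
  using congruence_kernel[OF closed_free[OF regular_identities_wf[OF E_regular]] hom_regular_closure] .

lemma iso_quotient_replica_kernel:
  "iso ar (free_carrier ar E X // replica_kernel ar E X)
     (quot_op (replica_kernel ar E X) (free_op ar E X))
     (free_carrier ar (regular_ids ar) X) (free_op ar (regular_ids ar) X)
     (\<lambda>K. regular_closure ar X (SOME C. C \<in> K))"
  using iso_quotient_kernel[OF closed_free[OF regular_identities_wf[OF E_regular]] hom_regular_closure
      regular_closure_onto] .

lemma sl_replica_replica_kernel:
  "sl_replica ar (free_carrier ar E X) (free_op ar E X) (replica_kernel ar E X)"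
  unfolding sl_replica_def
proof (intro conjI allI impI)
  let ?A = "free_carrier ar E X" and ?\<rho> = "replica_kernel ar E X"
  show congruence: "congruence ar ?A (free_op ar E X) ?\<rho>"
    by (rule congruence_replica_kernel)
  have closed: "closed ar (?A // ?\<rho>) (quot_op ?\<rho> (free_op ar E X))"
    by (rule closed_quotient[OF closed_free[OF regular_identities_wf[OF E_regular]] congruence])
  then show "in_S ar (?A // ?\<rho>) (quot_op ?\<rho> (free_op ar E X))"
    unfolding in_S_def
    using models_iso[OF iso_quotient_replica_kernel closed
        free_models[OF regular_identities_wf[OF order_refl]] regular_identities_wf[OF order_refl]]
    by simp
next
  fix \<theta>
  assume \<theta>: "congruence ar (free_carrier ar E X) (free_op ar E X) \<theta> \<and>
    in_S ar (free_carrier ar E X // \<theta>) (quot_op \<theta> (free_op ar E X))"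
  show "replica_kernel ar E X \<subseteq> \<theta>"
  proof (clarify)
    fix C D
    assume "(C, D) \<in> kernel (regular_closure ar X)" "C \<in> free_carrier ar E X" "D \<in> free_carrier ar E X"
    moreover from this obtain s t where "s \<in> terms_over ar X" "C = free_rel ar E X `` {s}"
      "t \<in> terms_over ar X" "D = free_rel ar E X `` {t}"
      by (auto simp: free_carrier_def elim!: quotientE)
    ultimately show "(C, D) \<in> \<theta>"
      using S_congruence_relates_same_vars[OF regular_identities_wf[OF E_regular]] \<theta>
        kernel_regular_closure_iff by blast
  qed
qed

end

lemma models_replica_kernel_class:
  assumes plural: "plural ar" and wf_\<Sigma>: "\<forall>(u, v)\<in>\<Sigma>. wf_trm ar u \<and> wf_trm ar v"
    and K: "K \<in> free_carrier ar (prolong ar \<Sigma>) X // replica_kernel ar (prolong ar \<Sigma>) X"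
  shows "models \<Sigma> K (free_op ar (prolong ar \<Sigma>) X)"
  unfolding models_def satisfies_def
proof (clarify)
  let ?E = "prolong ar \<Sigma>"
  fix u v and \<sigma> :: "nat \<Rightarrow> _"
  assume uv: "(u, v) \<in> \<Sigma>" and \<sigma>: "\<forall>n. \<sigma> n \<in> K"
  have E_regular: "?E \<subseteq> regular_ids ar"
    using prolong_regular[OF plural wf_\<Sigma>] .
  obtain s\<^sub>0 where s\<^sub>0: "s\<^sub>0 \<in> terms_over ar X" and K_classes:
    "\<forall>D\<in>K. \<exists>t. t \<in> terms_over ar X \<and> vars t = vars s\<^sub>0 \<and> D = free_rel ar ?E X `` {t}"
    by (rule replica_kernel_class_vars[OF E_regular K])
  have W: "finite (vars s\<^sub>0)" "vars s\<^sub>0 \<noteq> {}"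
    using s\<^sub>0 vars_nonempty[OF plural] by (auto simp: finite_vars terms_over_def)
  have reps: "\<forall>n. \<exists>t. t \<in> terms_over ar X \<and> vars t = vars s\<^sub>0 \<and> \<sigma> n = free_rel ar ?E X `` {t}"
    using \<sigma> K_classes by blast
  obtain rep where
    "\<forall>n. rep n \<in> terms_over ar X \<and> vars (rep n) = vars s\<^sub>0 \<and> \<sigma> n = free_rel ar ?E X `` {rep n}"
    using choice[OF reps] by blast
  then have rep: "\<forall>n. rep n \<in> terms_over ar X \<and> vars (rep n) = vars s\<^sub>0"
    and \<sigma>_eq: "\<sigma> = (\<lambda>n. free_rel ar ?E X `` {rep n})"
    by auto
  have "(subst rep u, subst rep v) \<in> free_rel ar ?E X"
    using deriv_prolong_instance[OF uv W rep] by (simp add: free_rel_def)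
  then have "free_rel ar ?E X `` {subst rep u} = free_rel ar ?E X `` {subst rep v}"
    by (rule equiv_class_eq[OF equiv_free_rel[OF regular_identities_wf[OF E_regular]]])
  moreover have "eval (free_op ar ?E X) \<sigma> w = free_rel ar ?E X `` {subst rep w}" if "wf_trm ar w" for w
    unfolding \<sigma>_eq using rep by (intro eval_free[OF regular_identities_wf[OF E_regular] that]) simp
  ultimately show "eval (free_op ar ?E X) \<sigma> (fst (u, v)) = eval (free_op ar ?E X) \<sigma> (snd (u, v))"
    using uv wf_\<Sigma> by auto
qed

theorem proposition3p2:
  fixes ar :: "'o \<Rightarrow> nat" and \<Sigma> :: "'o ident set" and X :: "'x set"
  assumes "plural ar"
    and "\<forall>(u, v) \<in> \<Sigma>. wf_trm ar u \<and> wf_trm ar v"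
  shows "\<exists>\<rho>. sl_replica ar (free_carrier ar (prolong ar \<Sigma>) X) (free_op ar (prolong ar \<Sigma>) X) \<rho>
           \<and> (\<exists>h. iso ar (free_carrier ar (prolong ar \<Sigma>) X // \<rho>)
                         (quot_op \<rho> (free_op ar (prolong ar \<Sigma>) X))
                         (free_carrier ar (regular_ids ar) X) (free_op ar (regular_ids ar) X) h)
           \<and> (\<forall>C \<in> free_carrier ar (prolong ar \<Sigma>) X // \<rho>.
                 in_Var ar \<Sigma> C (free_op ar (prolong ar \<Sigma>) X))
           \<and> in_V_circ_S ar \<Sigma> (free_carrier ar (prolong ar \<Sigma>) X) (free_op ar (prolong ar \<Sigma>) X)"
proof -
  let ?A = "free_carrier ar (prolong ar \<Sigma>) X" and ?F = "free_op ar (prolong ar \<Sigma>) X"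
  let ?\<rho> = "replica_kernel ar (prolong ar \<Sigma>) X"
  have regular: "prolong ar \<Sigma> \<subseteq> regular_ids ar"
    using prolong_regular[OF assms] .
  have replica: "sl_replica ar ?A ?F ?\<rho>"
    using sl_replica_replica_kernel[OF regular] .
  then have S: "congruence ar ?A ?F ?\<rho>" "in_S ar (?A // ?\<rho>) (quot_op ?\<rho> ?F)"
    by (simp_all add: sl_replica_def)
  have classes: "\<forall>C \<in> ?A // ?\<rho>. in_Var ar \<Sigma> C ?F"
    using closed_congruence_class_in_S[OF assms(1) closed_free[OF regular_identities_wf[OF regular]] S]
      models_replica_kernel_class[OF assms, where X = X] by (simp add: in_Var_def)
  have "in_V_circ_S ar \<Sigma> ?A ?F"
    unfolding in_V_circ_S_def using S classes by blast
  then show ?thesis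
    using replica iso_quotient_replica_kernel[OF regular, where X = X] classes by blast
qed

end
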